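(* Let $\mathbf{x}=(\ldots,x_{-1},x_0,x_1,\ldots)$ be commuting indeterminates indexed by $\mathbb{Z}$. Let $T=(t_{ij})$ be an $\mathbb{N}$-tableau of shape $\lambda$ and let $\widehat{T}$ be its image under the toggle map defined in the context. Then \[|\widehat{T}|_{\mathbf{x}}=\sum_{(i,j)\in\lambda}t_{ij}\,h_{\lambda}(i,j;\mathbf{x}).\]
   Context: Partitions are drawn in English notation with matrix coordinates: the box in row $i$ and column $j$ is $(i,j)$. An $\mathbb{N}$-tableau of shape $\lambda$ is an assignment of a nonnegative integer to each box of $\lambda$. The hook $H_\lambda(i,j)$ is the set of boxes $(i,j')\in\lambda$ with $j'\ge j$ together with the boxes $(i',j)\in\lambda$ with $i'\ge i$. The $\mathbf{x}$-hook-length is $h_\lambda(i,j;\mathbf{x})=\sum_{(i',j')\in H_\lambda(i,j)}x_{j'-i'}$, and the $\mathbf{x}$-weight of an $\mathbb{N}$-tableau $S=(s_{ij})$ of shape $\lambda$ is $|S|_{\mathbf{x}}=\sum_{(i,j)\in\lambda}s_{ij}x_{j-i}$. A corner box is a box $(i,j)$ such that neither $(i+1,j)$ nor $(i,j+1)$ is a box. The toggle map $T\mapsto\widehat{T}$ is defined recursively: $\widehat{\emptyset}=\emptyset$; if $T'$ is obtained from $T$ by adding a corner box $(i,j)$ (of $\mathrm{sh}(T')$) with entry $x$, then $\widehat{T'}$ is obtained from $\widehat{T}$ as follows. For $k\ge1$ let $\beta_k,\gamma_k,\alpha_k$ be the entries of $\widehat{T}$ at $(i-k,j-k)$, $(i-k+1,j-k)$,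 $(i-k,j-k+1)$ respectively (taken to be $0$ if the box is not in $\mathrm{sh}(T)$). Then $\widehat{T'}$ agrees with $\widehat{T}$ except that for $1\le k<\min(i,j)$ the entry at $(i-k,j-k)$ becomes $\max(\alpha_{k+1},\gamma_{k+1})+\min(\alpha_k,\gamma_k)-\beta_k$, and the entry at $(i,j)$ is $\max(\alpha_1,\gamma_1)+x$. This is independent of the order in which boxes are added. *)

theory Defs
  imports Main
begin

text \<open>Boxes are pairs (i,j) of a row index i >= 1 and a column index j >= 1 (matrix
coordinates, English notation).\<close>

definition young_diagram :: "(nat \<times> nat) set \<Rightarrow> bool" where
  "young_diagram S \<longleftrightarrow> finite S \<and> (\<forall>(i,j)\<in>S. 1 \<le> i \<and> 1 \<le> j) \<and>
     (\<forall>i j i' j'. (i,j) \<in> S \<longrightarrow> 1 \<le> i' \<longrightarrow> i' \<le> i \<longrightarrow> 1 \<le> j' \<longrightarrow> j' \<le> j \<longrightarrow> (i',j') \<in> S)"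

definition corner_box :: "(nat \<times> nat) set \<Rightarrow> nat \<times> nat \<Rightarrow> bool" where
  "corner_box S b \<longleftrightarrow> b \<in> S \<and> (fst b + 1, snd b) \<notin> S \<and> (fst b, snd b + 1) \<notin> S"

definition hook :: "(nat \<times> nat) set \<Rightarrow> nat \<times> nat \<Rightarrow> (nat \<times> nat) set" where
  "hook S b = {(i',j') \<in> S. i' = fst b \<and> j' \<ge> snd b} \<union> {(i',j') \<in> S. j' = snd b \<and> i' \<ge> fst b}"

definition content :: "nat \<times> nat \<Rightarrow> int" where
  "content b = int (snd b) - int (fst b)"

definition hook_length :: "(nat \<times> nat) set \<Rightarrow> nat \<times> nat \<Rightarrow> (int \<Rightarrow> 'a::comm_ring_1) \<Rightarrow> 'a" where
  "hook_length S b x = (\<Sum>c\<in>hook S b. x (content c))"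

definition xweight :: "(nat \<times> nat) set \<Rightarrow> (nat \<times> nat \<Rightarrow> int) \<Rightarrow> (int \<Rightarrow> 'a::comm_ring_1) \<Rightarrow> 'a" where
  "xweight S U x = (\<Sum>b\<in>S. of_int (U b) * x (content b))"

text \<open>One step of the toggle map: Th is the image of T (shape S), and the box (i,j)
with entry e is added. Entries of Th outside S are read as 0.\<close>

definition toggle_step :: "(nat \<times> nat) set \<Rightarrow> (nat \<times> nat \<Rightarrow> int) \<Rightarrow> nat \<times> nat \<Rightarrow> int \<Rightarrow> (nat \<times> nat \<Rightarrow> int)" where
  "toggle_step S Th b e =
    (let i = fst b; j = snd b;
         ent = (\<lambda>q. if q \<in> S then Th q else 0);
         \<beta> = (\<lambda>k. ent (i - k, j - k));
         \<gamma> = (\<lambda>k. ent (i - k + 1, j - k));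
         \<alpha> = (\<lambda>k. ent (i - k, j - k + 1))
     in (\<lambda>p. if p = (i, j) then max (\<alpha> 1) (\<gamma> 1) + e
             else if (\<exists>k. 1 \<le> k \<and> k < min i j \<and> p = (i - k, j - k))
               then (let k = i - fst p in max (\<alpha> (k+1)) (\<gamma> (k+1)) + min (\<alpha> k) (\<gamma> k) - \<beta> k)
             else Th p))"

text \<open>toggle S T Th: Th is (the image under the toggle map of) the tableau T restricted to
shape S, computed by adding the boxes of S one corner at a time in any admissible order.\<close>

inductive toggle :: "(nat \<times> nat) set \<Rightarrow> (nat \<times> nat \<Rightarrow> nat) \<Rightarrow> (nat \<times> nat \<Rightarrow> int) \<Rightarrow> bool" where
  toggle_empty: "toggle {} T (\<lambda>_. 0)"
| toggle_add: "\<lbrakk> toggle S T Th; young_diagram S; b \<notin> S; young_diagram (insert b S);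
                 corner_box (insert b S) b \<rbrakk>
               \<Longrightarrow> toggle (insert b S) T (toggle_step S Th b (int (T b)))"

end

theory Submission
  imports Defs
begin

text \<open>
Call (p,q) a rim box of S if (p+1,q+1) is not in S. For every rim box (p,q), the entries of
T-hat on the diagonal ending at (p,q) add up to the sum of T over the rectangle [1,p] x [1,q];
moreover T-hat is a reverse plane partition. Both invariants survive adding a corner (i,j):
only the diagonal through (i,j) changes, and since max a c + min a c = a + c its new entries
telescope to t(i,j) plus the diagonal sums ending at (i-1,j) and (i,j-1) minus the one ending
at (i-1,j-1), which is the rectangle sum for (i,j) by inclusion-exclusion. So the weight grows by
x(j-i) times the sum of T over [1,i] x [1,j] - [1,i-1] x [1,j-1]. These are exactly the boxes
whose hook gains (i,j), so the hook side grows by the same amount.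
\<close>

lemma young_diagram_finite: "young_diagram S \<Longrightarrow> finite S"
  by (simp add: young_diagram_def)

lemma young_diagram_pos: "young_diagram S \<Longrightarrow> (p, q) \<in> S \<Longrightarrow> 1 \<le> p \<and> 1 \<le> q"
  unfolding young_diagram_def by blast

lemma young_diagram_closed:
  "young_diagram S \<Longrightarrow> (p, q) \<in> S \<Longrightarrow> 1 \<le> p' \<Longrightarrow> p' \<le> p \<Longrightarrow> 1 \<le> q' \<Longrightarrow> q' \<le> q \<Longrightarrow>
    (p', q') \<in> S"
  unfolding young_diagram_def by blast

section \<open>Diagonal and rectangle sums\<close>

definition diagonal_sum :: "(nat \<times> nat \<Rightarrow> int) \<Rightarrow> nat \<Rightarrow> nat \<Rightarrow> int" where
  "diagonal_sum U p q = (\<Sum>k<min p q. U (p - k, q - k))"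

definition rectangle_sum :: "(nat \<times> nat \<Rightarrow> nat) \<Rightarrow> nat \<Rightarrow> nat \<Rightarrow> int" where
  "rectangle_sum T p q = (\<Sum>b\<in>{1..p} \<times> {1..q}. int (T b))"

lemma diagonal_sum_0 [simp]: "diagonal_sum U 0 q = 0" "diagonal_sum U p 0 = 0"
  by (simp_all add: diagonal_sum_def)

lemma rectangle_sum_0 [simp]: "rectangle_sum T 0 q = 0" "rectangle_sum T p 0 = 0"
  by (simp_all add: rectangle_sum_def)

lemma diagonal_sum_Suc: "diagonal_sum U (Suc p) (Suc q) = U (Suc p, Suc q) + diagonal_sum U p q"
  unfolding diagonal_sum_def min_Suc_Suc sum.lessThan_Suc_shift by simp

lemma sum_diagonal_eq_diagonal_sum:
  assumes "\<And>q. U (0, q) = 0" "\<And>p. U (p, 0) = 0" "min p q \<le> n"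
  shows "(\<Sum>k<n. U (p - k, q - k)) = diagonal_sum U p q"
proof -
  have "U (p - k, q - k) = 0" if "min p q \<le> k" for k
    using that assms(1,2) by (cases "p \<le> q") simp_all
  then have "(\<Sum>k<n. U (p - k, q - k)) = (\<Sum>k<min p q. U (p - k, q - k))"
    using assms(3) by (intro sum.mono_neutral_right) auto
  then show ?thesis by (simp add: diagonal_sum_def)
qed

lemma rectangle_sum_inclusion_exclusion:
  assumes "1 \<le> p" "1 \<le> q"
  shows "rectangle_sum T p q =
    int (T (p, q)) + rectangle_sum T (p - 1) q + rectangle_sum T p (q - 1)
    - rectangle_sum T (p - 1) (q - 1)"
proof -
  let ?t = "\<lambda>b. int (T b)"
  let ?A = "{1..p - 1} \<times> {1..q}" and ?B = "{1..p} \<times> {1..q - 1}"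
  have "{1..p} \<times> {1..q} = insert (p, q) (?A \<union> ?B)" "(p, q) \<notin> ?A \<union> ?B"
    using assms by auto
  moreover have "?A \<inter> ?B = {1..p - 1} \<times> {1..q - 1}" by auto
  moreover have "sum ?t (?A \<union> ?B) + sum ?t (?A \<inter> ?B) = sum ?t ?A + sum ?t ?B"
    by (rule sum.union_inter) auto
  ultimately show ?thesis by (simp add: rectangle_sum_def)
qed

lemma rectangle_sum_diff:
  "rectangle_sum T p q - rectangle_sum T (p - 1) (q - 1) =
    (\<Sum>b\<in>{1..p} \<times> {1..q} - {1..p - 1} \<times> {1..q - 1}. int (T b))"
  unfolding rectangle_sum_def by (rule sum_diff[symmetric]) auto

section \<open>Hook lengths under adding a box\<close>

lemma hook_insert:
  "hook (insert b S) c = (if b \<in> hook (insert b S) c then insert b (hook S c) else hook S c)"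
  unfolding hook_def by auto

lemma hook_length_insert:
  assumes "finite S" "b \<notin> S"
  shows "hook_length (insert b S) c x =
    hook_length S c x + (if b \<in> hook (insert b S) c then x (content b) else 0)"
proof -
  have "hook S c \<subseteq> S" by (auto simp: hook_def)
  then have "finite (hook S c)" "b \<notin> hook S c" using assms finite_subset by auto
  then show ?thesis
    unfolding hook_length_def by (subst hook_insert) (simp add: add.commute)
qed

lemma hook_eq_empty:
  assumes "young_diagram S" "(i, j) \<notin> S" "1 \<le> i" "1 \<le> j"
  shows "hook S (i, j) = {}"
  using assms young_diagram_closed[OF assms(1)] unfolding hook_def by fastforce

lemma boxes_with_hook_through:
  assumes "young_diagram S" "(i, j) \<in> S"
  shows "{c \<in> S. (i, j) \<in> hook S c} = {1..i} \<times> {1..j} - {1..i - 1} \<times> {1..j - 1}"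
proof
  show "{c \<in> S. (i, j) \<in> hook S c} \<subseteq> {1..i} \<times> {1..j} - {1..i - 1} \<times> {1..j - 1}"
    using young_diagram_pos[OF assms(1)] unfolding hook_def by fastforce
  show "{1..i} \<times> {1..j} - {1..i - 1} \<times> {1..j - 1} \<subseteq> {c \<in> S. (i, j) \<in> hook S c}"
    using young_diagram_closed[OF assms] assms(2) unfolding hook_def by fastforce
qed

lemma hook_sum_insert:
  assumes "young_diagram S" "young_diagram (insert (i, j) S)" "(i, j) \<notin> S"
  shows "(\<Sum>c\<in>insert (i, j) S. of_nat (T c) * hook_length (insert (i, j) S) c x) =
    (\<Sum>c\<in>S. of_nat (T c) * hook_length S c x) +
    of_int (rectangle_sum T i j - rectangle_sum T (i - 1) (j - 1)) * x (content (i, j))"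
proof -
  let ?S' = "insert (i, j) S" and ?xc = "x (content (i, j))"
  have fin: "finite S" using young_diagram_finite[OF assms(1)] .
  have "1 \<le> i" "1 \<le> j" using young_diagram_pos[OF assms(2)] by auto
  then have "hook_length S (i, j) x = 0"
    using hook_eq_empty[OF assms(1,3)] by (simp add: hook_length_def)
  have "(\<Sum>c\<in>?S'. of_nat (T c) * hook_length ?S' c x) =
      (\<Sum>c\<in>?S'. of_nat (T c) * hook_length S c x) +
      (\<Sum>c\<in>?S'. of_nat (T c) * (if (i, j) \<in> hook ?S' c then ?xc else 0))"
    unfolding hook_length_insert[OF fin assms(3)] distrib_left by (rule sum.distrib)
  also have "(\<Sum>c\<in>?S'. of_nat (T c) * hook_length S c x) = (\<Sum>c\<in>S. of_nat (T c) * hook_length S c x)"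
    using fin assms(3) \<open>hook_length S (i, j) x = 0\<close> by simp
  also have "(\<Sum>c\<in>?S'. of_nat (T c) * (if (i, j) \<in> hook ?S' c then ?xc else 0)) =
      (\<Sum>c\<in>{1..i} \<times> {1..j} - {1..i - 1} \<times> {1..j - 1}. of_nat (T c) * ?xc)"
  proof -
    have "(\<Sum>c\<in>?S'. of_nat (T c) * (if (i, j) \<in> hook ?S' c then ?xc else 0)) =
        (\<Sum>c\<in>{c \<in> ?S'. (i, j) \<in> hook ?S' c}. of_nat (T c) * ?xc)"
      using fin by (subst sum.inter_filter) (auto intro: sum.cong)
    then show ?thesis by (simp only: boxes_with_hook_through[OF assms(2) insertI1])
  qed
  also have "\<dots> = of_int (rectangle_sum T i j - rectangle_sum T (i - 1) (j - 1)) * ?xc"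
    unfolding rectangle_sum_diff by (simp add: sum_distrib_right of_int_sum)
  finally show ?thesis .
qed

section \<open>The toggle map at a corner\<close>

definition reverse_plane_partition :: "(nat \<times> nat) set \<Rightarrow> (nat \<times> nat \<Rightarrow> int) \<Rightarrow> bool" where
  "reverse_plane_partition S U \<longleftrightarrow> (\<forall>c. c \<notin> S \<longrightarrow> U c = 0) \<and> (\<forall>c. 0 \<le> U c) \<and>
     (\<forall>p q. (p, Suc q) \<in> S \<longrightarrow> U (p, q) \<le> U (p, Suc q)) \<and>
     (\<forall>p q. (Suc p, q) \<in> S \<longrightarrow> U (p, q) \<le> U (Suc p, q))"

definition rim_diagonal_sums ::
    "(nat \<times> nat) set \<Rightarrow> (nat \<times> nat \<Rightarrow> nat) \<Rightarrow> (nat \<times> nat \<Rightarrow> int) \<Rightarrow> bool" where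
  "rim_diagonal_sums S T U \<longleftrightarrow>
     (\<forall>p q. (p, q) \<in> S \<longrightarrow> (Suc p, Suc q) \<notin> S \<longrightarrow> diagonal_sum U p q = rectangle_sum T p q)"

locale toggle_corner =
  fixes S :: "(nat \<times> nat) set" and T :: "nat \<times> nat \<Rightarrow> nat" and Th :: "nat \<times> nat \<Rightarrow> int"
    and i j :: nat
  assumes young: "young_diagram S" and young_insert: "young_diagram (insert (i, j) S)"
    and new: "(i, j) \<notin> S" and corner: "corner_box (insert (i, j) S) (i, j)"
    and rpp: "reverse_plane_partition S Th" and rim: "rim_diagonal_sums S T Th"
begin

definition Th' :: "nat \<times> nat \<Rightarrow> int" where
  "Th' = toggle_step S Th (i, j) (int (T (i, j)))"

definition diagonal :: "(nat \<times> nat) set" where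
  "diagonal = (\<lambda>k. (i - k, j - k)) ` {..<min i j}"

lemma ij_pos: "1 \<le> i" "1 \<le> j"
  using young_diagram_pos[OF young_insert, of i j] by auto

lemma in_rectangle: "1 \<le> p \<Longrightarrow> p \<le> i \<Longrightarrow> 1 \<le> q \<Longrightarrow> q \<le> j \<Longrightarrow> (p, q) \<in> insert (i, j) S"
  using young_diagram_closed[OF young_insert, of i j p q] by auto

lemma in_rectangle_S:
  "1 \<le> p \<Longrightarrow> p \<le> i \<Longrightarrow> 1 \<le> q \<Longrightarrow> q \<le> j \<Longrightarrow> (p, q) \<noteq> (i, j) \<Longrightarrow> (p, q) \<in> S"
  using in_rectangle by blast

lemma no_box_beyond: "(p, q) \<in> S \<Longrightarrow> i \<le> p \<Longrightarrow> j \<le> q \<Longrightarrow> False"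
  using young_diagram_closed[OF young, of p q i j] new ij_pos by blast

lemma right_below_outside: "(i, Suc j) \<notin> insert (i, j) S" "(Suc i, j) \<notin> insert (i, j) S"
  using corner by (auto simp: corner_box_def)

lemma Th_outside: "c \<notin> S \<Longrightarrow> Th c = 0"
  and Th_nonneg: "0 \<le> Th c"
  and Th_mono_row: "(p, Suc q) \<in> S \<Longrightarrow> Th (p, q) \<le> Th (p, Suc q)"
  and Th_mono_col: "(Suc p, q) \<in> S \<Longrightarrow> Th (p, q) \<le> Th (Suc p, q)"
  using rpp unfolding reverse_plane_partition_def by blast+

lemma Th_axes [simp]: "Th (0, q) = 0" "Th (p, 0) = 0"
  using young_diagram_pos[OF young] by (auto intro: Th_outside)

lemma rim_sum: "(p, q) \<in> S \<Longrightarrow> (Suc p, Suc q) \<notin> S \<Longrightarrow> diagonal_sum Th p q = rectangle_sum T p q"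
  using rim by (simp add: rim_diagonal_sums_def)

lemma rim_sum_below:
  assumes "p \<le> i" "q \<le> j" "(p, q) \<noteq> (i, j)" "(Suc p, Suc q) \<notin> S"
  shows "diagonal_sum Th p q = rectangle_sum T p q"
proof (cases "p = 0 \<or> q = 0")
  case True
  then show ?thesis by auto
next
  case False
  then have "(p, q) \<in> S" using in_rectangle[of p q] assms(1-3) by auto
  then show ?thesis using rim_sum assms(4) by blast
qed

lemma diagonal_iff: "c \<in> diagonal \<longleftrightarrow> (\<exists>k<min i j. c = (i - k, j - k))"
  unfolding diagonal_def by auto

lemma diagonal_subset: "diagonal \<subseteq> insert (i, j) S"
proof
  fix c assume "c \<in> diagonal"
  then obtain k where "k < min i j" "c = (i - k, j - k)" by (auto simp: diagonal_iff)
  then show "c \<in> insert (i, j) S" using in_rectangle[of "i - k" "j - k"] by auto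
qed

lemma sum_over_diagonal: "(\<Sum>c\<in>diagonal. f c) = (\<Sum>k<min i j. f (i - k, j - k))"
proof -
  have "inj_on (\<lambda>k. (i - k, j - k)) {..<min i j}" by (auto simp: inj_on_def)
  then show ?thesis unfolding diagonal_def by (simp add: sum.reindex)
qed

lemma sum_diagonal_pred:
  "min (p - 1) (q - 1) \<le> n \<Longrightarrow> (\<Sum>k<n. Th (p - Suc k, q - Suc k)) = diagonal_sum Th (p - 1) (q - 1)"
  using sum_diagonal_eq_diagonal_sum[of Th "p - 1" "q - 1" n] by simp

lemma Th_zero_extension: "(if c \<in> S then Th c else 0) = Th c"
  using Th_outside by auto

text \<open>Both cases of toggle_step in one formula: for k = 0 the min and Th terms vanish, since
(i,j+1), (i+1,j) and (i,j) lie outside S.\<close>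

lemma Th'_on_diagonal:
  assumes "k < min i j"
  shows "Th' (i - k, j - k) =
    max (Th (i - Suc k, j - k)) (Th (i - k, j - Suc k)) +
    min (Th (i - k, Suc j - k)) (Th (Suc i - k, j - k)) - Th (i - k, j - k) +
    (if k = 0 then int (T (i, j)) else 0)"
proof (cases "k = 0")
  case True
  have "Th (i, Suc j) = 0" "Th (Suc i, j) = 0" "Th (i, j) = 0"
    using right_below_outside new by (auto intro: Th_outside)
  with True ij_pos show ?thesis by (simp add: Th'_def toggle_step_def Let_def Th_zero_extension)
next
  case False
  have ne: "(i - k, j - k) \<noteq> (i, j)" using assms False by auto
  have ex: "\<exists>k'. 1 \<le> k' \<and> k' < min i j \<and> (i - k, j - k) = (i - k', j - k')"
    using assms False by (intro exI[of _ k]) auto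
  have "i - (i - k) = k" "j - Suc k + 1 = j - k" "i - Suc k + 1 = i - k"
    "j - k + 1 = Suc j - k" "i - k + 1 = Suc i - k" "i - (k + 1) = i - Suc k" "j - (k + 1) = j - Suc k"
    using assms by auto
  then have "Th' (i - k, j - k) =
      max (Th (i - Suc k, j - k)) (Th (i - k, j - Suc k)) +
      min (Th (i - k, Suc j - k)) (Th (Suc i - k, j - k)) - Th (i - k, j - k)"
    unfolding Th'_def toggle_step_def Let_def fst_conv snd_conv if_not_P[OF ne] if_P[OF ex]
    by (simp only: Th_zero_extension)
  then show ?thesis using False by simp
qed

lemma Th'_off_diagonal: "c \<notin> diagonal \<Longrightarrow> Th' c = Th c"
proof -
  assume c: "c \<notin> diagonal"
  then have ne: "c \<noteq> (i, j)" using ij_pos by (auto simp: diagonal_iff)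
  have ex: "\<not> (\<exists>k. 1 \<le> k \<and> k < min i j \<and> c = (i - k, j - k))"
    using c by (auto simp: diagonal_iff)
  show ?thesis
    unfolding Th'_def toggle_step_def Let_def fst_conv snd_conv if_not_P[OF ne] if_not_P[OF ex] ..
qed

lemma Th'_diagonal_sum: "(\<Sum>k<min i j. Th' (i - k, j - k)) = rectangle_sum T i j"
proof -
  define m where "m = min i j"
  define a where "a k = Th (i - k, Suc j - k)" for k
  define g where "g k = Th (Suc i - k, j - k)" for k
  define d where "d k = Th (i - k, j - k)" for k
  define h where "h k = min (a k) (g k) - d k" for k
  have "0 < m" using ij_pos by (simp add: m_def)
  have "h 0 = 0"
    using right_below_outside new by (simp add: h_def a_def g_def d_def Th_outside)
  moreover have "h m = 0"
    \<comment> \<open>one of a m, g m lies on an axis and the other is nonnegative: this is why the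
      reverse plane partition invariant is carried along\<close>
  proof (cases "m = i")
    case True
    then show ?thesis using Th_nonneg[of "(1, j - m)"] by (simp add: h_def a_def g_def d_def)
  next
    case False
    then have "m = j" by (simp add: m_def min_def split: if_splits)
    then show ?thesis using Th_nonneg[of "(i - m, 1)"] by (simp add: h_def a_def g_def d_def)
  qed
  ultimately have h_shift: "(\<Sum>k<m. h k) = (\<Sum>k<m. h (Suc k))"
    using sum_lessThan_telescope[of h m] by (simp add: sum_subtractf)
  have max_min: "max u v + (min u v - w) = u + v - w" for u v w :: int
    by (simp add: max_def min_def)
  have "(\<Sum>k<m. Th' (i - k, j - k)) =
      (\<Sum>k<m. max (a (Suc k)) (g (Suc k)) + h k + (if k = 0 then int (T (i, j)) else 0))"
    by (rule sum.cong) (simp_all add: Th'_on_diagonal m_def a_def g_def d_def h_def)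
  also have "\<dots> = (\<Sum>k<m. max (a (Suc k)) (g (Suc k))) + (\<Sum>k<m. h (Suc k)) + int (T (i, j))"
    using \<open>0 < m\<close> by (simp add: sum.distrib h_shift)
  also have "\<dots> = (\<Sum>k<m. a (Suc k)) + (\<Sum>k<m. g (Suc k)) - (\<Sum>k<m. d (Suc k)) + int (T (i, j))"
    by (simp add: h_def max_min sum.distrib[symmetric] sum_subtractf[symmetric])
  also have "\<dots> = diagonal_sum Th (i - 1) j + diagonal_sum Th i (j - 1) - diagonal_sum Th (i - 1) (j - 1)
      + int (T (i, j))"
    unfolding a_def g_def d_def by (subst (1 2 3) sum_diagonal_pred) (auto simp: m_def)
  also have "\<dots> = rectangle_sum T (i - 1) j + rectangle_sum T i (j - 1)
      - rectangle_sum T (i - 1) (j - 1) + int (T (i, j))"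
    using right_below_outside new ij_pos by (simp add: rim_sum_below)
  finally show ?thesis
    using rectangle_sum_inclusion_exclusion[OF ij_pos] by (simp add: m_def)
qed

lemma Th_le_neighbours:
  assumes "1 \<le> k" "k < min i j"
  shows "Th (i - k, j - k) \<le> Th (i - k, Suc j - k)" "Th (i - k, j - k) \<le> Th (Suc i - k, j - k)"
    "Th (i - Suc k, j - k) \<le> Th (i - k, j - k)" "Th (i - k, j - Suc k) \<le> Th (i - k, j - k)"
proof -
  have "(i - k, Suc j - k) \<in> S" "(Suc i - k, j - k) \<in> S" "(i - k, j - k) \<in> S"
    by (rule in_rectangle_S; use assms in auto)+
  moreover have "Suc (i - Suc k) = i - k" "Suc (j - Suc k) = j - k" "Suc j - k = Suc (j - k)"
    "Suc i - k = Suc (i - k)"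
    using assms by auto
  ultimately show "Th (i - k, j - k) \<le> Th (i - k, Suc j - k)" "Th (i - k, j - k) \<le> Th (Suc i - k, j - k)"
    "Th (i - Suc k, j - k) \<le> Th (i - k, j - k)" "Th (i - k, j - Suc k) \<le> Th (i - k, j - k)"
    using Th_mono_row Th_mono_col by metis+
qed

lemma Th'_lower:
  assumes "k < min i j"
  shows "max (Th (i - Suc k, j - k)) (Th (i - k, j - Suc k)) \<le> Th' (i - k, j - k)"
proof -
  have "0 \<le> min (Th (i - k, Suc j - k)) (Th (Suc i - k, j - k)) - Th (i - k, j - k) +
      (if k = 0 then int (T (i, j)) else 0)"
  proof (cases "k = 0")
    case True
    then show ?thesis using right_below_outside new by (simp add: Th_outside)
  next
    case False
    then show ?thesis using Th_le_neighbours assms by simp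
  qed
  then show ?thesis using Th'_on_diagonal[OF assms] by linarith
qed

lemma Th'_upper:
  assumes "1 \<le> k" "k < min i j"
  shows "Th' (i - k, j - k) \<le> min (Th (i - k, Suc j - k)) (Th (Suc i - k, j - k))"
  using Th'_on_diagonal[OF assms(2)] Th_le_neighbours[OF assms] assms(1) by (auto simp: max_def min_def)

lemma Th'_nonneg: "0 \<le> Th' c"
proof (cases "c \<in> diagonal")
  case True
  then obtain k where "k < min i j" "c = (i - k, j - k)" by (auto simp: diagonal_iff)
  then show ?thesis using Th'_lower Th_nonneg[of "(i - Suc k, j - k)"] by fastforce
next
  case False
  then show ?thesis using Th'_off_diagonal Th_nonneg by simp
qed

lemma Th'_mono_row:
  assumes "(p, Suc q) \<in> insert (i, j) S"
  shows "Th' (p, q) \<le> Th' (p, Suc q)"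
proof (cases "(p, q) \<in> diagonal")
  case True
  then obtain k where k: "k < min i j" "(p, q) = (i - k, j - k)" by (auto simp: diagonal_iff)
  have "k \<noteq> 0" using k assms right_below_outside by (cases k) auto
  moreover have "(p, Suc q) \<notin> diagonal" using k by (auto simp: diagonal_iff)
  ultimately show ?thesis using Th'_off_diagonal Th'_upper[of k] k by (simp add: Suc_diff_le)
next
  case False
  show ?thesis
  proof (cases "(p, Suc q) \<in> diagonal")
    case True
    then obtain k where k: "k < min i j" "(p, Suc q) = (i - k, j - k)" by (auto simp: diagonal_iff)
    then have "(p, q) = (i - k, j - Suc k)" by auto
    then show ?thesis using Th'_off_diagonal[OF False] Th'_lower[OF k(1)] k(2) by simp
  next
    case outside: False
    then have "(p, Suc q) \<in> S" using assms diagonal_iff ij_pos by force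
    then show ?thesis using Th'_off_diagonal False outside Th_mono_row by simp
  qed
qed

lemma Th'_mono_col:
  assumes "(Suc p, q) \<in> insert (i, j) S"
  shows "Th' (p, q) \<le> Th' (Suc p, q)"
proof (cases "(p, q) \<in> diagonal")
  case True
  then obtain k where k: "k < min i j" "(p, q) = (i - k, j - k)" by (auto simp: diagonal_iff)
  have "k \<noteq> 0" using k assms right_below_outside by (cases k) auto
  moreover have "(Suc p, q) \<notin> diagonal" using k by (auto simp: diagonal_iff)
  ultimately show ?thesis using Th'_off_diagonal Th'_upper[of k] k by (simp add: Suc_diff_le)
next
  case False
  show ?thesis
  proof (cases "(Suc p, q) \<in> diagonal")
    case True
    then obtain k where k: "k < min i j" "(Suc p, q) = (i - k, j - k)" by (auto simp: diagonal_iff)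
    then have "(p, q) = (i - Suc k, j - k)" by auto
    then show ?thesis using Th'_off_diagonal[OF False] Th'_lower[OF k(1)] k(2) by simp
  next
    case outside: False
    then have "(Suc p, q) \<in> S" using assms diagonal_iff ij_pos by force
    then show ?thesis using Th'_off_diagonal False outside Th_mono_col by simp
  qed
qed

lemma reverse_plane_partition_Th': "reverse_plane_partition (insert (i, j) S) Th'"
  unfolding reverse_plane_partition_def
proof (intro conjI allI impI)
  fix c assume "c \<notin> insert (i, j) S"
  then show "Th' c = 0" using diagonal_subset Th'_off_diagonal[of c] Th_outside[of c] by auto
qed (use Th'_nonneg Th'_mono_row Th'_mono_col in auto)

lemma Th_diagonal_sum: "(\<Sum>k<min i j. Th (i - k, j - k)) = rectangle_sum T (i - 1) (j - 1)"
proof -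
  have "(\<Sum>k<min i j. Th (i - k, j - k)) = diagonal_sum Th i j"
    by (simp add: diagonal_sum_def)
  also have "\<dots> = Th (i, j) + diagonal_sum Th (i - 1) (j - 1)"
    using diagonal_sum_Suc[of Th "i - 1" "j - 1"] ij_pos by simp
  also have "\<dots> = rectangle_sum T (i - 1) (j - 1)"
    using new Th_outside rim_sum_below[of "i - 1" "j - 1"] ij_pos by simp
  finally show ?thesis .
qed

lemma rim_diagonal_avoids_diagonal:
  assumes "(p, q) \<in> S" "(Suc p, Suc q) \<notin> insert (i, j) S" "k < min p q"
  shows "(p - k, q - k) \<notin> diagonal"
proof
  assume "(p - k, q - k) \<in> diagonal"
  then obtain k' where k': "k' < min i j" "p - k = i - k'" "q - k = j - k'"
    by (auto simp: diagonal_iff)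
  consider "k < k'" | "k = k'" | "k' < k" by linarith
  then show False
  proof cases
    case 1
    then have "(Suc p, Suc q) \<in> insert (i, j) S" using assms(3) k' by (intro in_rectangle) auto
    then show False using assms(2) by blast
  next
    case 2
    then have "(p, q) = (i, j)" using assms(3) k' by auto
    then show False using assms(1) new by simp
  next
    case 3
    then have "i \<le> p" "j \<le> q" using assms(3) k' by auto
    then show False using no_box_beyond[OF assms(1)] by blast
  qed
qed

lemma rim_diagonal_sums_Th': "rim_diagonal_sums (insert (i, j) S) T Th'"
  unfolding rim_diagonal_sums_def
proof (intro allI impI)
  fix p q
  assume pq: "(p, q) \<in> insert (i, j) S" and rim_box: "(Suc p, Suc q) \<notin> insert (i, j) S"
  show "diagonal_sum Th' p q = rectangle_sum T p q"
  proof (cases "(p, q) = (i, j)")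
    case True
    then show ?thesis using Th'_diagonal_sum by (simp add: diagonal_sum_def)
  next
    case False
    then have "(p, q) \<in> S" using pq by blast
    then have "diagonal_sum Th' p q = diagonal_sum Th p q"
      unfolding diagonal_sum_def
      using rim_diagonal_avoids_diagonal rim_box by (intro sum.cong) (auto simp: Th'_off_diagonal)
    then show ?thesis using rim_sum \<open>(p, q) \<in> S\<close> rim_box by simp
  qed
qed

lemma xweight_Th':
  "xweight (insert (i, j) S) Th' x =
    xweight S Th x + of_int (rectangle_sum T i j - rectangle_sum T (i - 1) (j - 1)) * x (content (i, j))"
proof -
  let ?S' = "insert (i, j) S"
  have fin: "finite ?S'" using young_diagram_finite[OF young_insert] .
  have "xweight ?S' Th' x - xweight ?S' Th x = (\<Sum>c\<in>?S'. of_int (Th' c - Th c) * x (content c))"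
    by (simp add: xweight_def sum_subtractf algebra_simps)
  also have "\<dots> = (\<Sum>c\<in>diagonal. of_int (Th' c - Th c) * x (content c))"
    using fin diagonal_subset Th'_off_diagonal by (intro sum.mono_neutral_right) auto
  also have "\<dots> = of_int (\<Sum>c\<in>diagonal. Th' c - Th c) * x (content (i, j))"
    by (auto simp: diagonal_iff content_def sum_distrib_right of_int_sum intro!: sum.cong)
  also have "(\<Sum>c\<in>diagonal. Th' c - Th c) = rectangle_sum T i j - rectangle_sum T (i - 1) (j - 1)"
    by (simp add: sum_over_diagonal sum_subtractf Th'_diagonal_sum Th_diagonal_sum)
  finally have "xweight ?S' Th' x - xweight ?S' Th x =
      of_int (rectangle_sum T i j - rectangle_sum T (i - 1) (j - 1)) * x (content (i, j))" .
  moreover have "xweight ?S' Th x = xweight S Th x"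
    using fin new Th_outside by (simp add: xweight_def)
  ultimately show ?thesis by (simp add: algebra_simps)
qed

end

lemma toggle_invariants:
  "toggle S T Th \<Longrightarrow> reverse_plane_partition S Th \<and> rim_diagonal_sums S T Th"
proof (induction rule: toggle.induct)
  case (toggle_empty T)
  show ?case by (simp add: reverse_plane_partition_def rim_diagonal_sums_def)
next
  case (toggle_add S T Th b)
  obtain i j where b: "b = (i, j)" by (cases b)
  interpret toggle_corner S T Th i j
    using toggle_add b by unfold_locales auto
  show ?case
    using reverse_plane_partition_Th' rim_diagonal_sums_Th' b by (simp add: Th'_def)
qed

theorem proposition3p3:
  fixes S :: "(nat \<times> nat) set" and T :: "nat \<times> nat \<Rightarrow> nat" and Th :: "nat \<times> nat \<Rightarrow> int"
    and x :: "int \<Rightarrow> 'a::comm_ring_1"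
  assumes "young_diagram S"
    and "toggle S T Th"
  shows "xweight S Th x = (\<Sum>b\<in>S. of_nat (T b) * hook_length S b x)"
  using assms(2)
proof (induction rule: toggle.induct)
  case (toggle_empty T)
  show ?case by (simp add: xweight_def)
next
  case (toggle_add S T Th b)
  obtain i j where b: "b = (i, j)" by (cases b)
  interpret toggle_corner S T Th i j
    using toggle_add toggle_invariants[OF toggle_add.hyps(1)] b by unfold_locales auto
  from toggle_add.IH show ?case
    unfolding b Th'_def[symmetric] xweight_Th' hook_sum_insert[OF young young_insert new] by simp
qed

end
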